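(* Let $m>-\tfrac12$ be real and $k$ a (real or complex) number, and let $c_n=\int_{-\infty}^{\infty} e^{-mx^2}e^{ikx}\,\widehat{H}_n(x)\,dx$ for $n\ge 0$, so that $e^{-mx^2}e^{ikx}=\sum_{n\ge0}c_n\widehat{H}_n$. Then for all $n\ge 1$, \[ c_{n+1}=\frac{1}{2m+1}\, ik\sqrt{\frac{2}{n+1}}\,c_n-\frac{2m-1}{2m+1}\sqrt{\frac{n}{n+1}}\,c_{n-1}. \]
   Context: The Hermite polynomials $H_n$ are orthogonal on $\mathbb{R}$ with respect to $e^{-x^2}$, with $\int H_mH_ne^{-x^2}dx=\sqrt{\pi}\,2^n n!\,\delta_{mn}$. The (normalized) Hermite functions are $\widehat{H}_n(x)=\frac{1}{\pi^{1/4}\sqrt{2^n n!}}e^{-x^2/2}H_n(x)$, $n\ge0$; they form an orthonormal basis of $L^2(\mathbb{R})$. *)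

theory Defs
  imports "HOL-Analysis.Analysis"
begin

text \<open>Physicists' Hermite polynomials: H_0 = 1, H_1 = 2x,
  H_(n+2) = 2x H_(n+1) - 2(n+1) H_n; orthogonal w.r.t. exp(-x^2) with
  squared norm sqrt(pi) 2^n n!.\<close>
fun hermite :: "nat \<Rightarrow> real \<Rightarrow> real" where
  "hermite 0 x = 1"
| "hermite (Suc 0) x = 2 * x"
| "hermite (Suc (Suc n)) x = 2 * x * hermite (Suc n) x - 2 * real (Suc n) * hermite n x"

definition hermite_fun :: "nat \<Rightarrow> real \<Rightarrow> real" where
  "hermite_fun n x = exp (- x\<^sup>2 / 2) * hermite n x / (pi powr (1/4) * sqrt (2 ^ n * fact n))"

definition hcoeff :: "real \<Rightarrow> complex \<Rightarrow> nat \<Rightarrow> complex" where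
  "hcoeff m k n = (LINT x|lborel. exp (- complex_of_real (m * x\<^sup>2)) * exp (\<i> * k * complex_of_real x)
                    * complex_of_real (hermite_fun n x))"

end

theory Submission
  imports Defs "HOL-Probability.Distributions" "HOL-Real_Asymp.Real_Asymp"
begin

text \<open>
  Put a = m + 1/2 and I_n = \<integral> H_n(x) exp(-a x^2 + i k x) dx, so that c_n = I_n / \<parallel>H_n\<parallel>.
  Since H_n' = 2n H_(n-1), the vanishing integral over the real line of the derivative of
  H_n(x) exp(-a x^2 + i k x) gives 2a J_n = i k I_n + 2n I_(n-1) for the first moment
  J_n = \<integral> x H_n(x) exp(-a x^2 + i k x) dx, while the three-term recurrence
  H_(n+1) = 2x H_n - 2n H_(n-1) gives I_(n+1) = 2 J_n - 2n I_(n-1). Eliminating J_n yields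
  a I_(n+1) = i k I_n + 2n (1 - a) I_(n-1), and \<parallel>H_(n+1)\<parallel> = sqrt(2(n+1)) \<parallel>H_n\<parallel> turns this
  into the recurrence for c_n. All integrals exist and the boundary terms vanish because every
  integrand is a polynomially bounded function times a Gaussian.
\<close>

definition gaussian_bounded :: "(real \<Rightarrow> 'a::real_normed_vector) \<Rightarrow> bool" where
  "gaussian_bounded f \<longleftrightarrow>
     (\<exists>C c N. c > 0 \<and> (\<forall>x. norm (f x) \<le> C * ((1 + \<bar>x\<bar>) ^ N * exp (- c * x\<^sup>2))))"

lemma integrable_abs_power_gaussian:
  fixes c :: real
  assumes "c > 0"
  shows "integrable lborel (\<lambda>x. \<bar>x\<bar> ^ k * exp (- c * x\<^sup>2))"
proof -
  define \<sigma> where "\<sigma> = 1 / sqrt (2 * c)"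
  have "\<sigma> > 0" "2 * \<sigma>\<^sup>2 = 1 / c"
    using assms by (simp_all add: \<sigma>_def power_divide)
  then have "(\<lambda>x. \<bar>x\<bar> ^ k * exp (- c * x\<^sup>2))
      = (\<lambda>x. sqrt (2 * pi * \<sigma>\<^sup>2) * (normal_density 0 \<sigma> x * \<bar>x - 0\<bar> ^ k))"
    by (auto simp: normal_density_def fun_eq_iff field_simps)
  then show ?thesis
    using integrable_normal_moment_abs[OF \<open>\<sigma> > 0\<close>, of 0 k] by simp
qed

lemma integrable_poly_gaussian:
  fixes c :: real
  assumes "c > 0"
  shows "integrable lborel (\<lambda>x. (1 + \<bar>x\<bar>) ^ N * exp (- c * x\<^sup>2))"
proof -
  have "(\<lambda>x. (1 + \<bar>x\<bar>) ^ N * exp (- c * x\<^sup>2))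
      = (\<lambda>x. \<Sum>i\<le>N. real (N choose i) * (\<bar>x\<bar> ^ i * exp (- c * x\<^sup>2)))"
    unfolding add.commute[of 1] binomial_ring by (simp add: sum_distrib_right mult.assoc)
  then show ?thesis
    using integrable_abs_power_gaussian[OF assms] by simp
qed

lemma tendsto_poly_gaussian:
  fixes c :: real
  assumes "c > 0"
  shows "((\<lambda>x. (1 + \<bar>x\<bar>) ^ N * exp (- c * x\<^sup>2)) \<longlongrightarrow> 0) at_top"
    and "((\<lambda>x. (1 + \<bar>x\<bar>) ^ N * exp (- c * x\<^sup>2)) \<longlongrightarrow> 0) at_bot"
  using assms by real_asymp+

lemma gaussian_bounded_integrable:
  fixes f :: "real \<Rightarrow> 'a::{banach, second_countable_topology}"
  assumes "gaussian_bounded f" "f \<in> borel_measurable lborel"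
  shows "integrable lborel f"
proof -
  obtain c C N where "c > 0" and bound: "\<And>x. norm (f x) \<le> C * ((1 + \<bar>x\<bar>) ^ N * exp (- c * x\<^sup>2))"
    using assms(1) unfolding gaussian_bounded_def by blast
  have "integrable lborel (\<lambda>x. C * ((1 + \<bar>x\<bar>) ^ N * exp (- c * x\<^sup>2)))"
    using integrable_poly_gaussian[OF \<open>c > 0\<close>] by simp
  then show ?thesis
    by (rule Bochner_Integration.integrable_bound)
      (use assms(2) bound in \<open>auto intro: AE_I2 order_trans[OF _ abs_ge_self]\<close>)
qed

lemma gaussian_bounded_tendsto_0:
  assumes "gaussian_bounded f"
  shows "(f \<longlongrightarrow> 0) at_top" "(f \<longlongrightarrow> 0) at_bot"
proof -
  obtain c C N where "c > 0" and bound: "\<And>x. norm (f x) \<le> C * ((1 + \<bar>x\<bar>) ^ N * exp (- c * x\<^sup>2))"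
    using assms unfolding gaussian_bounded_def by blast
  note weight = tendsto_poly_gaussian[OF \<open>c > 0\<close>, THEN tendsto_mult_right_zero, of C N]
  show "(f \<longlongrightarrow> 0) at_top" "(f \<longlongrightarrow> 0) at_bot"
    using Lim_null_comparison[OF always_eventually[OF allI[OF bound]] weight(1)]
      Lim_null_comparison[OF always_eventually[OF allI[OF bound]] weight(2)] .
qed

lemma gaussian_bounded_mult_poly_bounded:
  fixes f g :: "real \<Rightarrow> 'a::real_normed_algebra"
  assumes "gaussian_bounded f" and g: "\<And>x. norm (g x) \<le> D * (1 + \<bar>x\<bar>) ^ M"
  shows "gaussian_bounded (\<lambda>x. g x * f x)"
proof -
  obtain c C N where "c > 0" and f: "\<And>x. norm (f x) \<le> C * ((1 + \<bar>x\<bar>) ^ N * exp (- c * x\<^sup>2))"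
    using assms(1) unfolding gaussian_bounded_def by blast
  have "norm (g x * f x) \<le> (D * C) * ((1 + \<bar>x\<bar>) ^ (M + N) * exp (- c * x\<^sup>2))" for x
  proof -
    have "norm (g x * f x) \<le> norm (g x) * norm (f x)"
      by (rule norm_mult_ineq)
    also have "\<dots> \<le> (D * (1 + \<bar>x\<bar>) ^ M) * (C * ((1 + \<bar>x\<bar>) ^ N * exp (- c * x\<^sup>2)))"
      by (intro mult_mono g f) (auto intro: order_trans[OF norm_ge_zero g])
    also have "\<dots> = (D * C) * ((1 + \<bar>x\<bar>) ^ (M + N) * exp (- c * x\<^sup>2))"
      by (simp add: power_add mult_ac)
    finally show ?thesis .
  qed
  then show ?thesis
    using \<open>c > 0\<close> unfolding gaussian_bounded_def by blast
qed

lemma hermite_Suc: "hermite (Suc n) x = 2 * x * hermite n x - 2 * real n * hermite (n - 1) x"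
  by (cases n) auto

lemma has_real_derivative_hermite:
  "(hermite n has_real_derivative 2 * real n * hermite (n - 1) x) (at x)"
proof (induction n x rule: hermite.induct)
  case (1 x)
  have "hermite 0 = (\<lambda>x. 1)" by auto
  then show ?case by simp
next
  case (2 x)
  have "hermite (Suc 0) = (\<lambda>x. 2 * x)" by auto
  then show ?case by (auto intro!: derivative_eq_intros)
next
  case (3 n x)
  have "hermite (Suc (Suc n)) = (\<lambda>x. 2 * x * hermite (Suc n) x - 2 * real (Suc n) * hermite n x)"
    by auto
  then show ?case
    by (auto intro!: derivative_eq_intros 3 simp: hermite_Suc[of n x] algebra_simps)
qed

lemma continuous_on_hermite: "continuous_on A (hermite n)"
  using has_real_derivative_hermite
  by (meson DERIV_isCont continuous_at_imp_continuous_on)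

lemma hermite_polynomially_bounded: "\<exists>C. \<forall>x. \<bar>hermite n x\<bar> \<le> C * (1 + \<bar>x\<bar>) ^ n"
proof (induction n rule: induct_nat_012)
  case 0
  show ?case by auto
next
  case 1
  show ?case by (auto intro!: exI[of _ 2] simp: abs_mult)
next
  case (ge2 n)
  obtain A B where A: "\<And>x. \<bar>hermite (Suc n) x\<bar> \<le> A * (1 + \<bar>x\<bar>) ^ Suc n"
    and B: "\<And>x. \<bar>hermite n x\<bar> \<le> B * (1 + \<bar>x\<bar>) ^ n"
    using ge2.IH by blast
  have "\<bar>hermite (Suc (Suc n)) x\<bar> \<le> (2 * A + 2 * (n + 1) * \<bar>B\<bar>) * (1 + \<bar>x\<bar>) ^ Suc (Suc n)" for x
  proof -
    define y where "y = 1 + \<bar>x\<bar>"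
    have y: "1 \<le> y" "\<bar>x\<bar> \<le> y"
      by (auto simp: y_def)
    have "\<bar>hermite n x\<bar> \<le> \<bar>B\<bar> * y ^ n"
      using B[of x] y(1) unfolding y_def[symmetric]
      by (meson abs_ge_self dual_order.trans mult_right_mono zero_le_power order_trans[OF zero_le_one])
    also have "\<dots> \<le> \<bar>B\<bar> * y ^ Suc (Suc n)"
      using y(1) by (intro mult_left_mono power_increasing) auto
    finally have B': "\<bar>hermite n x\<bar> \<le> \<bar>B\<bar> * y ^ Suc (Suc n)" .
    have "\<bar>hermite (Suc (Suc n)) x\<bar> \<le> \<bar>2 * x * hermite (Suc n) x\<bar> + \<bar>2 * real (Suc n) * hermite n x\<bar>"
      by (simp only: hermite.simps abs_triangle_ineq4)
    also have "\<dots> = 2 * \<bar>x\<bar> * \<bar>hermite (Suc n) x\<bar> + 2 * (n + 1) * \<bar>hermite n x\<bar>"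
      by (simp add: abs_mult)
    also have "\<dots> \<le> 2 * y * (A * y ^ Suc n) + 2 * (n + 1) * (\<bar>B\<bar> * y ^ Suc (Suc n))"
      using A[of x] B' y unfolding y_def[symmetric]
      by (intro add_mono mult_left_mono mult_mono) auto
    also have "\<dots> = (2 * A + 2 * (n + 1) * \<bar>B\<bar>) * y ^ Suc (Suc n)"
      by (simp add: algebra_simps)
    finally show ?thesis unfolding y_def .
  qed
  then show ?case by blast
qed

definition gaussian_wave :: "real \<Rightarrow> complex \<Rightarrow> real \<Rightarrow> complex" where
  "gaussian_wave a k x = exp (- of_real (a * x\<^sup>2) + \<i> * k * of_real x)"

lemma norm_gaussian_wave: "norm (gaussian_wave a k x) = exp (- a * x\<^sup>2 - Im k * x)"
  by (simp add: gaussian_wave_def norm_exp_eq_Re)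

lemma gaussian_bounded_gaussian_wave:
  assumes "a > 0"
  shows "gaussian_bounded (gaussian_wave a k)"
proof -
  have "norm (gaussian_wave a k x)
      \<le> exp ((Im k)\<^sup>2 / (2 * a)) * ((1 + \<bar>x\<bar>) ^ 0 * exp (- (a / 2) * x\<^sup>2))" for x
  proof -
    have "0 \<le> (a / 2) * (x + Im k / a)\<^sup>2"
      using assms by simp
    also have "\<dots> = (Im k)\<^sup>2 / (2 * a) - (a / 2) * x\<^sup>2 + a * x\<^sup>2 + Im k * x"
      using assms by (simp add: field_simps power2_eq_square)
    finally show ?thesis
      by (simp add: norm_gaussian_wave flip: exp_add)
  qed
  then show ?thesis
    using assms unfolding gaussian_bounded_def by (meson half_gt_zero)
qed

lemma has_vector_derivative_gaussian_wave:
  "(gaussian_wave a k has_vector_derivative gaussian_wave a k x * (\<i> * k - of_real (2 * a * x))) (at x)"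
proof -
  have "((\<lambda>z. exp (- (of_real a * z\<^sup>2) + \<i> * k * z)) has_field_derivative
      exp (- (of_real a * (of_real x)\<^sup>2) + \<i> * k * of_real x) * (\<i> * k - of_real (2 * a * x)))
      (at (of_real x))"
    by (auto intro!: derivative_eq_intros simp: algebra_simps)
  moreover have "gaussian_wave a k = (\<lambda>x. exp (- (of_real a * (of_real x)\<^sup>2) + \<i> * k * of_real x))"
    by (simp add: gaussian_wave_def fun_eq_iff)
  ultimately show ?thesis
    using has_vector_derivative_real_field by fastforce
qed

lemma continuous_on_gaussian_wave: "continuous_on A (gaussian_wave a k)"
  unfolding gaussian_wave_def by (intro continuous_intros)

lemma lebesgue_integral_derivative_eq_0:
  fixes F f :: "real \<Rightarrow> 'a::euclidean_space"
  assumes "\<And>x. (F has_vector_derivative f x) (at x)" "continuous_on UNIV f" "integrable lborel f"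
    and "(F \<longlongrightarrow> 0) at_top" "(F \<longlongrightarrow> 0) at_bot"
  shows "integral\<^sup>L lborel f = 0"
proof -
  have "(LBINT x=-\<infinity>..\<infinity>. f x) = 0 - 0"
    by (rule interval_integral_FTC_integrable)
      (use assms in \<open>auto simp: set_integrable_def continuous_on_eq_continuous_at ereal_tendsto_simps1\<close>)
  then show ?thesis
    by (simp add: interval_lebesgue_integral_def set_lebesgue_integral_def)
qed

definition hermite_moment :: "real \<Rightarrow> complex \<Rightarrow> nat \<Rightarrow> complex" where
  "hermite_moment a k n = (LINT x|lborel. of_real (hermite n x) * gaussian_wave a k x)"

lemma gaussian_bounded_hermite_wave:
  assumes "a > 0"
  shows "gaussian_bounded (\<lambda>x. of_real (hermite n x) * gaussian_wave a k x)"
proof -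
  obtain C where "\<And>x. \<bar>hermite n x\<bar> \<le> C * (1 + \<bar>x\<bar>) ^ n"
    using hermite_polynomially_bounded by blast
  then show ?thesis
    by (intro gaussian_bounded_mult_poly_bounded gaussian_bounded_gaussian_wave assms) simp
qed

lemma integrable_hermite_wave:
  assumes "a > 0"
  shows "integrable lborel (\<lambda>x. of_real (hermite n x) * gaussian_wave a k x)"
    and "integrable lborel (\<lambda>x. of_real x * (of_real (hermite n x) * gaussian_wave a k x))"
proof -
  have cont: "continuous_on UNIV (\<lambda>x. of_real (hermite n x) * gaussian_wave a k x)"
    by (intro continuous_intros continuous_on_hermite continuous_on_gaussian_wave)
  then show "integrable lborel (\<lambda>x. of_real (hermite n x) * gaussian_wave a k x)"
    by (intro gaussian_bounded_integrable gaussian_bounded_hermite_wave assms)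
      (simp add: borel_measurable_continuous_onI)
  have "gaussian_bounded (\<lambda>x. of_real x * (of_real (hermite n x) * gaussian_wave a k x))"
    by (rule gaussian_bounded_mult_poly_bounded[OF gaussian_bounded_hermite_wave[OF assms],
          where D=1 and M=1]) simp
  then show "integrable lborel (\<lambda>x. of_real x * (of_real (hermite n x) * gaussian_wave a k x))"
    by (rule gaussian_bounded_integrable)
      (auto intro!: borel_measurable_continuous_onI continuous_intros cont)
qed

lemma hermite_moment_integration_by_parts:
  assumes "a > 0"
  shows "of_real (2 * a) * (LINT x|lborel. of_real x * (of_real (hermite n x) * gaussian_wave a k x))
    = \<i> * k * hermite_moment a k n + of_real (2 * real n) * hermite_moment a k (n - 1)"
proof -
  define Q where "Q j x = of_real (hermite j x) * gaussian_wave a k x" for j x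
  define f where "f x = \<i> * k * Q n x + of_real (2 * real n) * Q (n - 1) x
    - of_real (2 * a) * (of_real x * Q n x)" for x
  have "(Q n has_vector_derivative f x) (at x)" for x
  proof -
    have "(Q n has_vector_derivative of_real (hermite n x) * (gaussian_wave a k x * (\<i> * k - of_real (2 * a * x)))
        + of_real (2 * real n * hermite (n - 1) x) * gaussian_wave a k x) (at x)"
      unfolding Q_def[abs_def]
      by (intro has_vector_derivative_mult has_vector_derivative_of_real
          has_vector_derivative_gaussian_wave has_real_derivative_hermite)
    then show ?thesis
      by (simp add: f_def Q_def algebra_simps)
  qed
  moreover have "continuous_on UNIV f"
    unfolding f_def Q_def
    by (intro continuous_intros continuous_on_hermite continuous_on_gaussian_wave)
  moreover have "integrable lborel f"
    unfolding f_def Q_def using integrable_hermite_wave[OF assms] by simp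
  moreover have "(Q n \<longlongrightarrow> 0) at_top" "(Q n \<longlongrightarrow> 0) at_bot"
    unfolding Q_def[abs_def] using gaussian_bounded_hermite_wave[OF assms]
    by (rule gaussian_bounded_tendsto_0)+
  ultimately have "integral\<^sup>L lborel f = 0"
    by (rule lebesgue_integral_derivative_eq_0)
  moreover have "integral\<^sup>L lborel f = \<i> * k * hermite_moment a k n + of_real (2 * real n) * hermite_moment a k (n - 1)
      - of_real (2 * a) * (LINT x|lborel. of_real x * Q n x)"
    unfolding f_def hermite_moment_def Q_def using integrable_hermite_wave[OF assms]
    by (simp del: of_real_mult)
  ultimately show ?thesis
    unfolding Q_def by (simp add: algebra_simps)
qed

lemma hermite_moment_Suc:
  assumes "a > 0"
  shows "hermite_moment a k (Suc n)
    = 2 * (LINT x|lborel. of_real x * (of_real (hermite n x) * gaussian_wave a k x))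
      - of_real (2 * real n) * hermite_moment a k (n - 1)"
proof -
  have "(\<lambda>x. of_real (hermite (Suc n) x) * gaussian_wave a k x)
    = (\<lambda>x. 2 * (of_real x * (of_real (hermite n x) * gaussian_wave a k x))
        - of_real (2 * real n) * (of_real (hermite (n - 1) x) * gaussian_wave a k x))"
    by (simp add: hermite_Suc fun_eq_iff algebra_simps)
  then show ?thesis
    unfolding hermite_moment_def using integrable_hermite_wave[OF assms]
    by (simp del: of_real_mult)
qed

lemma hermite_moment_recurrence:
  assumes "a > 0"
  shows "of_real a * hermite_moment a k (Suc n)
    = \<i> * k * hermite_moment a k n + of_real (2 * real n * (1 - a)) * hermite_moment a k (n - 1)"
proof -
  define J where "J = (LINT x|lborel. of_real x * (of_real (hermite n x) * gaussian_wave a k x))"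
  have "of_real a * hermite_moment a k (Suc n)
      = of_real (2 * a) * J - of_real (2 * real n * a) * hermite_moment a k (n - 1)"
    unfolding hermite_moment_Suc[OF assms] J_def by (simp add: algebra_simps)
  also have "\<dots> = \<i> * k * hermite_moment a k n + of_real (2 * real n) * hermite_moment a k (n - 1)
      - of_real (2 * real n * a) * hermite_moment a k (n - 1)"
    unfolding J_def hermite_moment_integration_by_parts[OF assms] ..
  finally show ?thesis
    by (simp add: algebra_simps)
qed

definition hermite_norm :: "nat \<Rightarrow> real" where
  "hermite_norm n = pi powr (1/4) * sqrt (2 ^ n * fact n)"

lemma hermite_norm_pos: "hermite_norm n > 0"
  by (simp add: hermite_norm_def)

lemma hermite_norm_Suc: "hermite_norm (Suc n) = sqrt (2 * real (Suc n)) * hermite_norm n"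
proof -
  have "2 ^ Suc n * fact (Suc n) = 2 * real (Suc n) * (2 ^ n * fact n)"
    by (simp add: algebra_simps)
  then show ?thesis
    by (simp only: hermite_norm_def real_sqrt_mult mult_ac)
qed

lemma hermite_norm_pred: "2 * real n * hermite_norm (n - 1) = sqrt (2 * real n) * hermite_norm n"
  by (cases n) (simp_all add: hermite_norm_Suc)

lemma hcoeff_eq_hermite_moment:
  "hcoeff m k n = hermite_moment (m + 1/2) k n / of_real (hermite_norm n)"
proof -
  have "exp (- of_real (m * x\<^sup>2)) * exp (\<i> * k * of_real x) * of_real (hermite_fun n x)
    = of_real (hermite n x) * gaussian_wave (m + 1/2) k x / of_real (hermite_norm n)" for x
  proof -
    have "exp (- of_real (m * x\<^sup>2)) * exp (\<i> * k * of_real x) * of_real (exp (- x\<^sup>2 / 2))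
      = gaussian_wave (m + 1/2) k x"
      by (simp add: gaussian_wave_def algebra_simps flip: exp_add exp_of_real)
    then show ?thesis
      by (simp add: hermite_fun_def hermite_norm_def mult_ac)
  qed
  then show ?thesis
    by (simp add: hcoeff_def hermite_moment_def)
qed

lemma hcoeff_recurrence_scaled:
  assumes "m > - 1/2"
  shows "of_real ((2 * m + 1) * sqrt (2 * real (Suc n))) * hcoeff m k (Suc n)
    = 2 * \<i> * k * hcoeff m k n - of_real ((2 * m - 1) * sqrt (2 * real n)) * hcoeff m k (n - 1)"
proof -
  define a where "a = m + 1/2"
  define c where "c j = hcoeff m k j" for j
  define N where "N j = complex_of_real (hermite_norm j)" for j
  have "a > 0"
    using assms by (simp add: a_def)
  have I: "hermite_moment a k j = N j * c j" for j
    using hermite_norm_pos[of j] by (simp add: c_def N_def a_def hcoeff_eq_hermite_moment)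
  have "N n \<noteq> 0"
    using hermite_norm_pos[of n] by (simp add: N_def)
  have "N n * (of_real a * of_real (sqrt (2 * real (Suc n))) * c (Suc n))
      = of_real a * hermite_moment a k (Suc n)"
    by (simp add: I N_def hermite_norm_Suc mult_ac)
  also have "\<dots> = \<i> * k * hermite_moment a k n
      + of_real ((1 - a) * (2 * real n * hermite_norm (n - 1))) * c (n - 1)"
    unfolding hermite_moment_recurrence[OF \<open>a > 0\<close>] by (simp add: I N_def mult_ac)
  also have "\<dots> = N n * (\<i> * k * c n + of_real ((1 - a) * sqrt (2 * real n)) * c (n - 1))"
    unfolding hermite_norm_pred by (simp add: I N_def algebra_simps)
  finally have rec: "of_real a * of_real (sqrt (2 * real (Suc n))) * c (Suc n)
      = \<i> * k * c n + of_real ((1 - a) * sqrt (2 * real n)) * c (n - 1)"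
    using \<open>N n \<noteq> 0\<close> by simp
  have "of_real ((2 * m + 1) * sqrt (2 * real (Suc n))) * c (Suc n)
      = 2 * (of_real a * of_real (sqrt (2 * real (Suc n))) * c (Suc n))"
    by (simp add: a_def algebra_simps)
  also have "\<dots> = 2 * \<i> * k * c n - of_real ((2 * m - 1) * sqrt (2 * real n)) * c (n - 1)"
    unfolding rec by (simp add: a_def algebra_simps)
  finally show ?thesis
    unfolding c_def .
qed

theorem lemma2p1:
  fixes m :: real and k :: complex and n :: nat
  assumes "m > - 1/2" and "n \<ge> 1"
  shows "hcoeff m k (n + 1) =
           1 / (2 * m + 1) * (\<i> * k * sqrt (2 / real (n + 1))) * hcoeff m k n
         - (2 * m - 1) / (2 * m + 1) * sqrt (real n / real (n + 1)) * hcoeff m k (n - 1)"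
proof -
  define t where "t = sqrt (2 * real (Suc n))"
  define q where "q = 2 * m + 1"
  have "t > 0" "q > 0"
    using assms(1) by (simp_all add: t_def q_def)
  have sqrt_2: "sqrt (2 / real (n + 1)) = 2 / t"
    using \<open>t > 0\<close> by (intro real_sqrt_unique) (auto simp: t_def power_divide field_simps)
  have sqrt_n: "sqrt (real n / real (n + 1)) = sqrt (2 * real n) / t"
    unfolding t_def real_sqrt_divide[symmetric] by (simp add: field_simps)
  have recurrence: "hcoeff m k (n + 1) = (2 * \<i> * k * hcoeff m k n
      - of_real ((2 * m - 1) * sqrt (2 * real n)) * hcoeff m k (n - 1)) / of_real (q * t)"
    using \<open>t > 0\<close> \<open>q > 0\<close>
    unfolding hcoeff_recurrence_scaled[OF assms(1), of n k, folded t_def q_def, symmetric] by simp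
  show ?thesis
    unfolding sqrt_2 sqrt_n recurrence q_def[symmetric]
    using \<open>t > 0\<close> \<open>q > 0\<close> by (simp add: field_simps)
qed

end
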